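(* Let $0<\varpi<2$ and $0\le\beta_s\le1$. Let $X$ be a binary random variable with distribution $(p,1-p)$, $p\in[0,1]$, and let $Y$ be the binary output of the channel with transition matrix $$p(y\mid x)=\begin{pmatrix}1-\beta_s&\beta_s\\ \beta_s&1-\beta_s\end{pmatrix}.$$ Then the message importance loss capacity is $$C(\varpi,\beta_s)=\max_{p\in[0,1]}\big\{L(\varpi,X)-L(\varpi,X\mid Y)\big\}=e^{\varpi/2}-\big(\beta_s e^{\varpi(1-\beta_s)}+(1-\beta_s)e^{\varpi\beta_s}\big),$$ the maximum being attained at the uniform input $p=1/2$.
   Context: For a discrete random variable $X$ with distribution $\{p(x_1),\dots,p(x_n)\}$ the message importance measure (MIM) is $L(\varpi,X)=\sum_i p(x_i)e^{\varpi(1-p(x_i))}$. For a pair $(X,Y)$ with joint law $p(x_i)p(y_j\mid x_i)$, $p(y_j)=\sum_i p(x_i)p(y_j\mid x_i)$ and $p(x_i\mid y_j)=p(x_i)p(y_j\mid x_i)/p(y_j)$, the conditional message importance measure (CMIM) is $L(\varpi,X\mid Y)=\sum_{j:\,p(y_j)>0} p(y_j)\sum_i p(x_i\mid y_j)e^{\varpi(1-p(x_i\mid y_j))}$. For a fixed transition matrix $p(y\mid x)$, the message importance loss capacity (MILC) is $C=\max_{p(x)}\{L(\varpi,X)-L(\varpi,X\mid Y)\}$, the maximum over input distributions. *)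

theory Defs
  imports "HOL-Analysis.Analysis"
begin

definition MIM :: "real \<Rightarrow> ('a::finite \<Rightarrow> real) \<Rightarrow> real" where
  "MIM w px = (\<Sum>x\<in>UNIV. px x * exp (w * (1 - px x)))"

definition out_dist :: "('a::finite \<Rightarrow> real) \<Rightarrow> ('a \<Rightarrow> 'b \<Rightarrow> real) \<Rightarrow> 'b \<Rightarrow> real" where
  "out_dist px W y = (\<Sum>x\<in>UNIV. px x * W x y)"

definition post :: "('a::finite \<Rightarrow> real) \<Rightarrow> ('a \<Rightarrow> 'b \<Rightarrow> real) \<Rightarrow> 'b \<Rightarrow> 'a \<Rightarrow> real" where
  "post px W y x = px x * W x y / out_dist px W y"

definition CMIM :: "real \<Rightarrow> ('a::finite \<Rightarrow> real) \<Rightarrow> ('a \<Rightarrow> 'b::finite \<Rightarrow> real) \<Rightarrow> real" where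
  "CMIM w px W = (\<Sum>y\<in>{y. out_dist px W y > 0}. out_dist px W y *
      (\<Sum>x\<in>UNIV. post px W y x * exp (w * (1 - post px W y x))))"

text \<open>Binary input distribution (p, 1-p): True is x_1, False is x_2.\<close>
definition bin_dist :: "real \<Rightarrow> bool \<Rightarrow> real" where
  "bin_dist p x = (if x then p else 1 - p)"

definition bsc :: "real \<Rightarrow> bool \<Rightarrow> bool \<Rightarrow> real" where
  "bsc b x y = (if x = y then 1 - b else b)"

definition mil_bsc :: "real \<Rightarrow> real \<Rightarrow> real \<Rightarrow> real" where
  "mil_bsc w b p = MIM w (bin_dist p) - CMIM w (bin_dist p) (bsc b)"

end

theory Submission
  imports Defs
begin

text \<open>Write \<open>p = (1 + tanh A)/2\<close>, \<open>b = (1 + tanh B)/2\<close>, \<open>c = \<varpi>/2\<close> and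
  \<open>H X = cosh (X - c tanh X)\<close>. Then \<open>L(\<varpi>, X) = e\<^sup>c H A / cosh A\<close>, and the channel outputs
  have probabilities \<open>cosh (A \<mp> B) / (2 cosh A cosh B)\<close> with posteriors of the same form at
  \<open>A \<mp> B\<close>. So the loss at \<open>p\<close> falls short of the loss at \<open>p = 1/2\<close> (i.e. \<open>A = 0\<close>) by
  \<open>e\<^sup>c / (cosh A cosh B)\<close> times
  \<open>cosh A cosh B - cosh A H B - cosh B H A + (H (A + B) + H (A - B)) / 2\<close>.
  For \<open>0 \<le> c \<le> 1\<close> this is nonnegative, by monotonicity of \<open>cosh\<close> and the bound
  \<open>tanh (A + B) + tanh (A - B) \<le> 2 tanh A\<close>. Degenerate inputs and channels (\<open>p\<close> or \<open>b\<close> in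
  \<open>{0, 1}\<close>) are covered by \<open>L(\<varpi>, X | Y) \<ge> 1\<close>.\<close>

definition tanh_prob :: "real \<Rightarrow> real" where
  "tanh_prob x = (1 + tanh x) / 2"

definition binary_MIM :: "real \<Rightarrow> real \<Rightarrow> real" where
  "binary_MIM w q = q * exp (w * (1 - q)) + (1 - q) * exp (w * q)"

definition shifted_cosh :: "real \<Rightarrow> real \<Rightarrow> real" where
  "shifted_cosh c x = cosh (x - c * tanh x)"

section \<open>Hyperbolic inequalities\<close>

lemma tanh_le_self:
  fixes x :: real
  assumes "0 \<le> x"
  shows "tanh x \<le> x"
proof -
  have "(\<lambda>y. y - tanh y) 0 \<le> (\<lambda>y. y - tanh y) x"
  proof (rule DERIV_nonneg_imp_nondecreasing[OF assms])
    fix y :: real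
    have "((\<lambda>y. y - tanh y) has_real_derivative 1 - (1 - tanh y ^ 2)) (at y)"
      by (auto intro!: derivative_eq_intros)
    then show "\<exists>d. ((\<lambda>y. y - tanh y) has_real_derivative d) (at y) \<and> 0 \<le> d" by force
  qed
  then show ?thesis by simp
qed

lemma tanh_add_plus_tanh_diff_le:
  fixes x y :: real
  assumes "0 \<le> x" "0 \<le> y"
  shows "tanh (x + y) + tanh (x - y) \<le> 2 * tanh x"
proof -
  define a b where "a = tanh x" and "b = tanh y"
  have a: "0 \<le> a" "a < 1" and b: "0 \<le> b" "b < 1"
    using assms tanh_real_lt_1 by (auto simp: a_def b_def)
  have "0 \<le> a * b" "a * b \<le> a" using a b by (simp_all add: mult_right_le_one_le)
  then have pos: "0 < 1 + a * b" "0 < 1 - a * b" using a by linarith+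
  have "tanh (x + y) + tanh (x - y) = (a + b) / (1 + a * b) + (a - b) / (1 - a * b)"
    using tanh_add[of x y] tanh_add[of x "-y"] by (simp add: a_def b_def)
  also have "\<dots> = 2 * a * (1 - b * b) / ((1 + a * b) * (1 - a * b))"
    using pos by (simp add: field_simps, (simp add: algebra_simps)?)
  also have "\<dots> \<le> 2 * a"
  proof -
    have "(a * a) * (b * b) \<le> 1 * (b * b)"
      using a b by (intro mult_right_mono) (auto intro: mult_le_one)
    then have "2 * a * (1 - b * b) \<le> 2 * a * ((1 + a * b) * (1 - a * b))"
      using a by (intro mult_left_mono) (auto simp: algebra_simps)
    then show ?thesis using pos by (simp add: divide_le_eq)
  qed
  finally show ?thesis by (simp add: a_def)
qed

lemma tanh_shift_bounds:
  fixes c x :: real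
  assumes "0 \<le> c" "c \<le> 1" "0 \<le> x"
  shows "0 \<le> x - c * tanh x" "x - c * tanh x \<le> x"
proof -
  have "c * tanh x \<le> tanh x" "0 \<le> c * tanh x"
    using assms by (simp_all add: mult_left_le_one_le)
  then show "0 \<le> x - c * tanh x" "x - c * tanh x \<le> x"
    using tanh_le_self[OF assms(3)] by linarith+
qed

lemma shifted_cosh_minus [simp]: "shifted_cosh c (- x) = shifted_cosh c x"
proof -
  have "- x - c * tanh (- x) = - (x - c * tanh x)" by simp
  then show ?thesis unfolding shifted_cosh_def by (simp only: cosh_minus)
qed

lemma shifted_cosh_abs [simp]: "shifted_cosh c \<bar>x\<bar> = shifted_cosh c x"
  by (cases "0 \<le> x") simp_all

lemma shifted_cosh_abs_add_abs_diff:
  "shifted_cosh c (\<bar>x\<bar> + \<bar>y\<bar>) + shifted_cosh c (\<bar>x\<bar> - \<bar>y\<bar>)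
     = shifted_cosh c (x + y) + shifted_cosh c (x - y)"
proof -
  have neg: "shifted_cosh c (- u + v) = shifted_cosh c (u - v)"
            "shifted_cosh c (- u - v) = shifted_cosh c (u + v)" for u v
    using shifted_cosh_minus[of c "u - v"] shifted_cosh_minus[of c "u + v"] by simp_all
  show ?thesis
    by (cases "0 \<le> x"; cases "0 \<le> y")
      (simp_all add: neg add.commute[of "shifted_cosh c (x + y)"]
         shifted_cosh_minus[of c "y - x", symmetric])
qed

lemma shifted_cosh_le_cosh:
  assumes "0 \<le> c" "c \<le> 1"
  shows "shifted_cosh c x \<le> cosh x"
proof -
  have "cosh (abs x - c * tanh (abs x)) \<le> cosh (abs x)"
    using tanh_shift_bounds[OF assms abs_ge_zero] by (subst cosh_real_nonneg_le_iff) auto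
  then show ?thesis by (metis shifted_cosh_abs shifted_cosh_def cosh_real_abs)
qed

text \<open>With \<open>u = x - c tanh x\<close> and \<open>v = y - c tanh y\<close>, the right-hand sum equals
  \<open>2 cosh m cosh n\<close> with \<open>m \<ge> u\<close> and \<open>n \<ge> v\<close>; the claim then follows from
  \<open>(cosh x - cosh u) (cosh y - cosh v) \<ge> 0\<close>.\<close>

lemma shifted_cosh_cross_le_nonneg:
  fixes x y :: real
  assumes c: "0 \<le> c" "c \<le> 1" and xy: "0 \<le> x" "0 \<le> y"
  shows "cosh x * shifted_cosh c y + cosh y * shifted_cosh c x
           \<le> cosh x * cosh y + (shifted_cosh c (x + y) + shifted_cosh c (x - y)) / 2"
proof -
  define u v where "u = x - c * tanh x" and "v = y - c * tanh y"
  define m where "m = x - c * (tanh (x + y) + tanh (x - y)) / 2"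
  define n where "n = y - c * (tanh (y + x) + tanh (y - x)) / 2"
  have u: "0 \<le> u" "u \<le> x" and v: "0 \<le> v" "v \<le> y"
    unfolding u_def v_def using tanh_shift_bounds c xy by auto
  have "c * (tanh (x + y) + tanh (x - y)) \<le> c * (2 * tanh x)"
    using tanh_add_plus_tanh_diff_le[OF xy] c(1) by (rule mult_left_mono)
  then have um: "u \<le> m" unfolding u_def m_def by simp
  have "c * (tanh (y + x) + tanh (y - x)) \<le> c * (2 * tanh y)"
    using tanh_add_plus_tanh_diff_le[OF xy(2,1)] c(1) by (rule mult_left_mono)
  then have vn: "v \<le> n" unfolding v_def n_def by simp
  have "x + y - c * tanh (x + y) = m + n" "x - y - c * tanh (x - y) = m - n"
    using tanh_minus[of "x - y"] unfolding m_def n_def by (simp_all add: field_simps)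
  then have sum: "shifted_cosh c (x + y) + shifted_cosh c (x - y) = 2 * (cosh m * cosh n)"
    by (simp add: shifted_cosh_def cosh_add cosh_diff)
  have "cosh u * cosh v \<le> cosh m * cosh n"
    using u v um vn
    by (intro mult_mono) (auto simp: cosh_real_nonneg_le_iff)
  moreover have "0 \<le> (cosh x - cosh u) * (cosh y - cosh v)"
    using u v by (simp add: cosh_real_nonneg_le_iff)
  moreover have "(cosh x - cosh u) * (cosh y - cosh v)
      = cosh x * cosh y - cosh x * cosh v - cosh y * cosh u + cosh u * cosh v"
    by (simp add: algebra_simps)
  moreover have "shifted_cosh c x = cosh u" "shifted_cosh c y = cosh v"
    by (simp_all add: shifted_cosh_def u_def v_def)
  ultimately show ?thesis unfolding sum by simp
qed

lemma shifted_cosh_cross_le: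
  fixes x y :: real
  assumes "0 \<le> c" "c \<le> 1"
  shows "cosh x * shifted_cosh c y + cosh y * shifted_cosh c x
           \<le> cosh x * cosh y + (shifted_cosh c (x + y) + shifted_cosh c (x - y)) / 2"
  using shifted_cosh_cross_le_nonneg[OF assms abs_ge_zero abs_ge_zero, of x y]
  by (simp only: shifted_cosh_abs_add_abs_diff shifted_cosh_abs cosh_real_abs)

section \<open>Message importance measures\<close>

lemma CMIM_eq_sum_MIM_post:
  "CMIM w px W = (\<Sum>y\<in>{y. out_dist px W y > 0}. out_dist px W y * MIM w (post px W y))"
  unfolding CMIM_def MIM_def ..

lemma sum_post:
  assumes "out_dist px W y \<noteq> 0"
  shows "(\<Sum>x\<in>UNIV. post px W y x) = 1"
  unfolding post_def sum_divide_distrib[symmetric] out_dist_def[symmetric] using assms by simp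

lemma sum_out_dist:
  assumes "sum px UNIV = 1" "\<And>x. (\<Sum>y\<in>UNIV. W x y) = 1"
  shows "(\<Sum>y\<in>UNIV. out_dist px W y) = 1"
proof -
  have "(\<Sum>y\<in>UNIV. out_dist px W y) = (\<Sum>x\<in>UNIV. px x * (\<Sum>y\<in>UNIV. W x y))"
    unfolding out_dist_def by (subst sum.swap) (simp add: sum_distrib_left)
  then show ?thesis using assms by simp
qed

lemma MIM_ge_1:
  fixes f :: "'a::finite \<Rightarrow> real"
  assumes "\<And>x. 0 \<le> f x" "sum f UNIV = 1" "0 \<le> w"
  shows "1 \<le> MIM w f"
proof -
  have "f x \<le> f x * exp (w * (1 - f x))" for x
  proof -
    have "f x \<le> 1" using member_le_sum[of x UNIV f] assms by simp
    then have "1 \<le> exp (w * (1 - f x))" using assms(3) by simp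
    then show ?thesis using mult_left_mono[of 1 _ "f x"] assms(1) by simp
  qed
  then have "sum f UNIV \<le> MIM w f" unfolding MIM_def by (rule sum_mono)
  then show ?thesis using assms(2) by simp
qed

lemma CMIM_ge_1:
  fixes px :: "'a::finite \<Rightarrow> real" and W :: "'a \<Rightarrow> 'b::finite \<Rightarrow> real"
  assumes px: "\<And>x. 0 \<le> px x" "sum px UNIV = 1"
    and W: "\<And>x y. 0 \<le> W x y" "\<And>x. (\<Sum>y\<in>UNIV. W x y) = 1"
    and w: "0 \<le> w"
  shows "1 \<le> CMIM w px W"
proof -
  let ?o = "out_dist px W" and ?S = "{y. out_dist px W y > 0}"
  have o_nonneg: "0 \<le> ?o y" for y unfolding out_dist_def using px W by (simp add: sum_nonneg)
  have "1 \<le> MIM w (post px W y)" if "y \<in> ?S" for y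
    using that px W o_nonneg by (intro MIM_ge_1 w sum_post) (auto simp: post_def)
  then have "(\<Sum>y\<in>?S. ?o y * 1) \<le> CMIM w px W"
    unfolding CMIM_eq_sum_MIM_post by (intro sum_mono mult_left_mono) auto
  also have "(\<Sum>y\<in>?S. ?o y * 1) = (\<Sum>y\<in>UNIV. ?o y)"
    unfolding mult_1_right using o_nonneg
    by (intro sum.mono_neutral_left) (auto simp: order_less_le)
  finally show ?thesis using sum_out_dist[OF px(2) W(2)] by simp
qed

lemma MIM_bool:
  assumes "f False = 1 - f True"
  shows "MIM w f = binary_MIM w (f True)"
  using assms by (simp add: MIM_def binary_MIM_def UNIV_bool add.commute)

lemma MIM_bin_dist: "MIM w (bin_dist p) = binary_MIM w p"
  by (simp add: MIM_bool bin_dist_def)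

lemma out_dist_bin_dist_bsc:
  "out_dist (bin_dist p) (bsc b) True = p * (1 - b) + (1 - p) * b"
  "out_dist (bin_dist p) (bsc b) False = p * b + (1 - p) * (1 - b)"
  by (simp_all add: out_dist_def bin_dist_def bsc_def UNIV_bool add.commute)

lemma CMIM_bin_dist_bsc:
  assumes pos: "0 < p * (1 - b) + (1 - p) * b" "0 < p * b + (1 - p) * (1 - b)"
  shows "CMIM w (bin_dist p) (bsc b)
     = (p * (1 - b) + (1 - p) * b) * binary_MIM w (p * (1 - b) / (p * (1 - b) + (1 - p) * b))
     + (p * b + (1 - p) * (1 - b)) * binary_MIM w (p * b / (p * b + (1 - p) * (1 - b)))"
proof -
  let ?o = "out_dist (bin_dist p) (bsc b)" and ?q = "post (bin_dist p) (bsc b)"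
  have o_pos: "0 < ?o y" for y using pos by (cases y) (simp_all add: out_dist_bin_dist_bsc)
  have "?q y False = 1 - ?q y True" for y
    using sum_post[of "bin_dist p" "bsc b" y] o_pos[of y] by (simp add: UNIV_bool)
  then have "MIM w (?q y) = binary_MIM w (?q y True)" for y by (rule MIM_bool)
  moreover have "{y. 0 < ?o y} = UNIV" using o_pos by auto
  ultimately have "CMIM w (bin_dist p) (bsc b)
      = ?o True * binary_MIM w (?q True True) + ?o False * binary_MIM w (?q False True)"
    unfolding CMIM_eq_sum_MIM_post by (simp add: UNIV_bool add.commute)
  then show ?thesis
    by (simp add: post_def out_dist_bin_dist_bsc bin_dist_def bsc_def)
qed

lemma mil_bsc_le_binary_MIM:
  assumes "0 \<le> w" "0 \<le> p" "p \<le> 1" "0 \<le> b" "b \<le> 1"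
  shows "mil_bsc w b p \<le> binary_MIM w p - 1"
proof -
  have "1 \<le> CMIM w (bin_dist p) (bsc b)"
    using assms by (intro CMIM_ge_1) (auto simp: bin_dist_def bsc_def UNIV_bool)
  then show ?thesis unfolding mil_bsc_def MIM_bin_dist by simp
qed

lemma mil_bsc_half:
  "mil_bsc w b (1/2) = exp (w / 2) - binary_MIM w b"
proof -
  have out: "1/2 * (1 - b) + (1 - 1/2) * b = (1/2 :: real)"
    "1/2 * b + (1 - 1/2) * (1 - b) = (1/2 :: real)"
    by (simp_all add: field_simps)
  have post: "1/2 * (1 - b) / (1/2 :: real) = 1 - b" "1/2 * b / (1/2 :: real) = b"
    by simp_all
  have "CMIM w (bin_dist (1/2)) (bsc b) = (binary_MIM w (1 - b) + binary_MIM w b) / 2"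
    using CMIM_bin_dist_bsc[of "1/2" b w] unfolding out post by simp
  moreover have "binary_MIM w (1 - b) = binary_MIM w b"
    by (simp add: binary_MIM_def)
  moreover have "MIM w (bin_dist (1/2)) = exp (w / 2)"
    by (simp add: MIM_bin_dist binary_MIM_def)
  ultimately show ?thesis unfolding mil_bsc_def by simp
qed

section \<open>The hyperbolic parametrisation\<close>

lemma one_minus_tanh_prob: "1 - tanh_prob x = tanh_prob (- x)"
  unfolding tanh_prob_def by (simp add: field_simps)

lemma tanh_prob_surj:
  assumes "0 < q" "q < 1"
  obtains x where "tanh_prob x = q"
proof
  define r where "r = sqrt (q / (1 - q))"
  have r: "0 < r" "r\<^sup>2 = q / (1 - q)" unfolding r_def using assms by simp_all
  have "tanh (ln r) = (r\<^sup>2 - 1) / (r\<^sup>2 + 1)" using r(1) by (rule tanh_ln_real)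
  also have "\<dots> = 2 * q - 1" unfolding r(2) using assms by (simp add: field_simps)
  finally show "tanh_prob (ln r) = q" unfolding tanh_prob_def by simp
qed

lemma binary_MIM_tanh_prob:
  "binary_MIM w (tanh_prob x) = exp (w / 2) * shifted_cosh (w / 2) x / cosh x"
proof -
  define t where "t = w / 2 * tanh x"
  have exponents: "w * (1 - tanh_prob x) = w / 2 + - t" "w * tanh_prob x = w / 2 + t"
    unfolding t_def tanh_prob_def by (simp_all add: field_simps)
  have "binary_MIM w (tanh_prob x)
      = exp (w / 2) * (tanh_prob x * exp (- t) + (1 - tanh_prob x) * exp t)"
    unfolding binary_MIM_def exponents exp_add by (simp add: algebra_simps)
  also have "tanh_prob x * exp (- t) + (1 - tanh_prob x) * exp t = cosh t - tanh x * sinh t"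
    by (simp add: tanh_prob_def cosh_def sinh_def field_simps)
  also have "\<dots> = cosh (x - t) / cosh x"
    by (simp add: tanh_def cosh_diff field_simps)
  also have "cosh (x - t) = shifted_cosh (w / 2) x"
    by (simp add: shifted_cosh_def t_def)
  finally show ?thesis by simp
qed

lemma bsc_output_tanh_prob:
  "tanh_prob x * (1 - tanh_prob y) + (1 - tanh_prob x) * tanh_prob y
     = cosh (x - y) / (2 * cosh x * cosh y)"
  "tanh_prob x * (1 - tanh_prob y) / (tanh_prob x * (1 - tanh_prob y) + (1 - tanh_prob x) * tanh_prob y)
     = tanh_prob (x - y)"
proof -
  define a b where "a = tanh x" and "b = tanh y"
  have "\<bar>a\<bar> < 1" "\<bar>b\<bar> < 1"
    unfolding a_def b_def using tanh_real_lt_1 tanh_real_gt_neg1 by (auto simp: abs_less_iff)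
  moreover have "\<bar>a\<bar> * \<bar>b\<bar> \<le> \<bar>a\<bar>" using \<open>\<bar>b\<bar> < 1\<close> by (simp add: mult_left_le)
  moreover have "a * b \<le> \<bar>a\<bar> * \<bar>b\<bar>" by (metis abs_ge_self abs_mult)
  ultimately have pos: "0 < 1 - a * b" by linarith
  have out: "tanh_prob x * (1 - tanh_prob y) + (1 - tanh_prob x) * tanh_prob y = (1 - a * b) / 2"
    unfolding tanh_prob_def a_def b_def by (simp add: field_simps)
  show "tanh_prob x * (1 - tanh_prob y) + (1 - tanh_prob x) * tanh_prob y
     = cosh (x - y) / (2 * cosh x * cosh y)"
    unfolding out a_def b_def tanh_def by (simp add: cosh_diff field_simps)
  have "tanh (x - y) = (a - b) / (1 - a * b)"
    using tanh_add[of x "- y"] by (simp add: a_def b_def)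
  then show "tanh_prob x * (1 - tanh_prob y)
      / (tanh_prob x * (1 - tanh_prob y) + (1 - tanh_prob x) * tanh_prob y) = tanh_prob (x - y)"
    unfolding out using pos by (simp add: tanh_prob_def a_def b_def field_simps)
qed

lemma binary_MIM_le_exp_half:
  assumes "0 \<le> w" "w \<le> 2" "0 \<le> q" "q \<le> 1"
  shows "binary_MIM w q \<le> exp (w / 2)"
proof (cases "q = 0 \<or> q = 1")
  case True
  then show ?thesis using assms by (auto simp: binary_MIM_def)
next
  case False
  then obtain x where x: "tanh_prob x = q" using assms tanh_prob_surj[of q] by force
  have "shifted_cosh (w / 2) x \<le> cosh x" using assms by (intro shifted_cosh_le_cosh) auto
  then show ?thesis
    unfolding x[symmetric] binary_MIM_tanh_prob by (simp add: divide_le_eq mult_left_mono)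
qed

lemma mil_bsc_tanh_prob:
  "mil_bsc w (tanh_prob y) (tanh_prob x)
     = exp (w / 2) * (shifted_cosh (w / 2) x / cosh x
         - (shifted_cosh (w / 2) (x - y) + shifted_cosh (w / 2) (x + y)) / (2 * cosh x * cosh y))"
proof -
  let ?p = "tanh_prob x" and ?b = "tanh_prob y" and ?H = "shifted_cosh (w / 2)"
  have out_minus: "?p * (1 - ?b) + (1 - ?p) * ?b = cosh (x - y) / (2 * cosh x * cosh y)"
   and post_minus: "?p * (1 - ?b) / (?p * (1 - ?b) + (1 - ?p) * ?b) = tanh_prob (x - y)"
    by (rule bsc_output_tanh_prob)+
  have out_plus: "?p * ?b + (1 - ?p) * (1 - ?b) = cosh (x + y) / (2 * cosh x * cosh y)"
   and post_plus: "?p * ?b / (?p * ?b + (1 - ?p) * (1 - ?b)) = tanh_prob (x + y)"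
    using bsc_output_tanh_prob[of x "- y"] by (simp_all add: one_minus_tanh_prob)
  have "CMIM w (bin_dist ?p) (bsc ?b)
      = cosh (x - y) / (2 * cosh x * cosh y) * (exp (w / 2) * ?H (x - y) / cosh (x - y))
      + cosh (x + y) / (2 * cosh x * cosh y) * (exp (w / 2) * ?H (x + y) / cosh (x + y))"
    using CMIM_bin_dist_bsc[of ?p ?b w]
    unfolding post_minus post_plus unfolding out_minus out_plus binary_MIM_tanh_prob by simp
  also have "\<dots> = exp (w / 2) * (?H (x - y) + ?H (x + y)) / (2 * cosh x * cosh y)"
    by (simp add: field_simps)
  finally show ?thesis
    unfolding mil_bsc_def MIM_bin_dist binary_MIM_tanh_prob by (simp add: field_simps)
qed

lemma mil_bsc_le_half_interior:
  assumes "0 \<le> w" "w \<le> 2" "0 < p" "p < 1" "0 < b" "b < 1"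
  shows "mil_bsc w b p \<le> mil_bsc w b (1/2)"
proof -
  obtain x where x: "tanh_prob x = p" using assms tanh_prob_surj by metis
  obtain y where y: "tanh_prob y = b" using assms tanh_prob_surj by metis
  let ?H = "shifted_cosh (w / 2)"
  have "cosh x * ?H y + cosh y * ?H x \<le> cosh x * cosh y + (?H (x + y) + ?H (x - y)) / 2"
    using assms by (intro shifted_cosh_cross_le) auto
  then have "0 \<le> exp (w / 2) / (cosh x * cosh y)
      * (cosh x * cosh y + (?H (x + y) + ?H (x - y)) / 2 - cosh x * ?H y - cosh y * ?H x)"
    by simp
  also have "\<dots> = mil_bsc w b (1/2) - mil_bsc w b p"
    unfolding mil_bsc_half x[symmetric] y[symmetric] mil_bsc_tanh_prob binary_MIM_tanh_prob
    by (simp add: field_simps)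
  finally show ?thesis by simp
qed

lemma mil_bsc_le_half:
  assumes "0 \<le> w" "w \<le> 2" "0 \<le> p" "p \<le> 1" "0 \<le> b" "b \<le> 1"
  shows "mil_bsc w b p \<le> mil_bsc w b (1/2)"
proof -
  consider "0 < p" "p < 1" "0 < b" "b < 1" | "b = 0 \<or> b = 1" | "p = 0 \<or> p = 1"
    using assms by linarith
  then show ?thesis
  proof cases
    case 1
    then show ?thesis using assms mil_bsc_le_half_interior by simp
  next
    case 2
    then have "mil_bsc w b (1/2) = exp (w / 2) - 1"
      by (auto simp: mil_bsc_half binary_MIM_def)
    then show ?thesis using mil_bsc_le_binary_MIM binary_MIM_le_exp_half assms by fastforce
  next
    case 3
    then have "mil_bsc w b p \<le> 0"
      using mil_bsc_le_binary_MIM[of w p b] assms by (auto simp: binary_MIM_def)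
    moreover have "binary_MIM w b \<le> exp (w / 2)" using binary_MIM_le_exp_half assms by simp
    ultimately show ?thesis by (simp add: mil_bsc_half)
  qed
qed

theorem proposition1:
  fixes w b :: real
  assumes "0 < w" "w < 2" "0 \<le> b" "b \<le> 1"
  shows "(\<forall>p\<in>{0..1}. mil_bsc w b p \<le> mil_bsc w b (1/2))
    \<and> (SUP p\<in>{0..1}. mil_bsc w b p) = mil_bsc w b (1/2)
    \<and> mil_bsc w b (1/2) = exp (w / 2) - (b * exp (w * (1 - b)) + (1 - b) * exp (w * b))"
proof -
  have max: "\<forall>p\<in>{0..1}. mil_bsc w b p \<le> mil_bsc w b (1/2)"
    using mil_bsc_le_half assms by auto
  moreover have "(SUP p\<in>{0..1}. mil_bsc w b p) = mil_bsc w b (1/2)"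
    by (rule cSup_eq_maximum) (use max in auto)
  ultimately show ?thesis by (simp add: mil_bsc_half binary_MIM_def)
qed

end
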